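(* Let $k\geq p\geq 0$ and $n\geq 2k-p+2$ be integers, and let $G$ be an $(n+p+1)$-closed nearly balanced bipartite graph of order $2n-1$. If $$e(G)>n(n-k+p-2)+(k+2)(k-p+1),$$ then $G$ contains a complete bipartite subgraph of order $2n-k+p-1$. Furthermore, if $\delta(G)\geq k$, then $K_{n-1,n-k+p}\subseteq G$ or $K_{n,n-k+p-1}\subseteq G$.
   Context: A bipartite graph $G=(X,Y;E)$ is nearly balanced if $|X|=|Y|+1$. For an integer $r$, $G$ is $r$-closed if $d_G(x)+d_G(y)<r$ for every non-adjacent pair $x\in X$, $y\in Y$. $e(G)$ is the number of edges, $\delta(G)$ the minimum degree; $K_{a,b}\subseteq G$ means $G$ has a subgraph isomorphic to the complete bipartite graph $K_{a,b}$. *)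

theory Defs
  imports Main
begin

definition bipartite_graph :: "'a set \<Rightarrow> 'b set \<Rightarrow> ('a \<times> 'b) set \<Rightarrow> bool" where
  "bipartite_graph X Y E \<longleftrightarrow> finite X \<and> finite Y \<and> E \<subseteq> X \<times> Y"

definition degX :: "('a \<times> 'b) set \<Rightarrow> 'a \<Rightarrow> nat" where
  "degX E x = card {y. (x, y) \<in> E}"

definition degY :: "('a \<times> 'b) set \<Rightarrow> 'b \<Rightarrow> nat" where
  "degY E y = card {x. (x, y) \<in> E}"

definition nearly_balanced :: "'a set \<Rightarrow> 'b set \<Rightarrow> bool" where
  "nearly_balanced X Y \<longleftrightarrow> card X = card Y + 1"

definition r_closed :: "nat \<Rightarrow> 'a set \<Rightarrow> 'b set \<Rightarrow> ('a \<times> 'b) set \<Rightarrow> bool" where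
  "r_closed r X Y E \<longleftrightarrow>
     (\<forall>x\<in>X. \<forall>y\<in>Y. (x, y) \<notin> E \<longrightarrow> degX E x + degY E y < r)"

definition min_degree_ge :: "nat \<Rightarrow> 'a set \<Rightarrow> 'b set \<Rightarrow> ('a \<times> 'b) set \<Rightarrow> bool" where
  "min_degree_ge k X Y E \<longleftrightarrow> (\<forall>x\<in>X. k \<le> degX E x) \<and> (\<forall>y\<in>Y. k \<le> degY E y)"

definition has_Kab :: "'a set \<Rightarrow> 'b set \<Rightarrow> ('a \<times> 'b) set \<Rightarrow> nat \<Rightarrow> nat \<Rightarrow> bool" where
  "has_Kab X Y E a b \<longleftrightarrow>
     (\<exists>A B. A \<subseteq> X \<and> B \<subseteq> Y \<and> A \<times> B \<subseteq> E \<and>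
        ((card A = a \<and> card B = b) \<or> (card A = b \<and> card B = a)))"

definition has_complete_bipartite_of_order :: "'a set \<Rightarrow> 'b set \<Rightarrow> ('a \<times> 'b) set \<Rightarrow> nat \<Rightarrow> bool" where
  "has_complete_bipartite_of_order X Y E m \<longleftrightarrow>
     (\<exists>A B. A \<subseteq> X \<and> B \<subseteq> Y \<and> A \<noteq> {} \<and> B \<noteq> {} \<and> A \<times> B \<subseteq> E \<and> card A + card B = m)"

end

theory Submission
  imports Defs
begin

text \<open>Pass to the bipartite complement H = X \<times> Y - E. Closedness of G says that the degrees of
  the two ends of every edge of H sum to at least q = n - p - 1, and the edge bound says that H has
  fewer than (s + 1)(q - s - 1) edges, where s = k - p. Such a graph has a vertex cover of size at
  most s: either some vertex has degree at least q - s - 1 and we delete it and recurse, or all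
  degrees are smaller, and then the edges at the neighbours of an endpoint x of degree d of any
  edge already number at least d(q - d) \<ge> (s + 1)(q - s - 1). Removing a minimum
  cover (C1, C2) of H from X and Y leaves a complete bipartite subgraph of G of order at least
  2n - 1 - s. If moreover \<delta>(G) \<ge> k, a vertex x in C1 has a neighbour y outside C2 in H whose
  H-neighbours all lie in C1, and the degree condition on xy forces |C1| \<ge> s, so one of the
  two sides of the cover is empty.\<close>

definition edge_degree_sum_ge :: "nat \<Rightarrow> ('a \<times> 'b) set \<Rightarrow> bool" where
  "edge_degree_sum_ge q F \<longleftrightarrow> (\<forall>(x, y)\<in>F. q \<le> degX F x + degY F y)"

definition vertex_cover :: "'a set \<Rightarrow> 'b set \<Rightarrow> ('a \<times> 'b) set \<Rightarrow> bool" where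
  "vertex_cover C\<^sub>1 C\<^sub>2 F \<longleftrightarrow> (\<forall>(x, y)\<in>F. x \<in> C\<^sub>1 \<or> y \<in> C\<^sub>2)"

definition min_vertex_cover :: "'a set \<Rightarrow> 'b set \<Rightarrow> ('a \<times> 'b) set \<Rightarrow> bool" where
  "min_vertex_cover C\<^sub>1 C\<^sub>2 F \<longleftrightarrow> finite C\<^sub>1 \<and> finite C\<^sub>2 \<and> vertex_cover C\<^sub>1 C\<^sub>2 F \<and>
     (\<forall>D\<^sub>1 D\<^sub>2. finite D\<^sub>1 \<longrightarrow> finite D\<^sub>2 \<longrightarrow> vertex_cover D\<^sub>1 D\<^sub>2 F \<longrightarrow>
        card C\<^sub>1 + card C\<^sub>2 \<le> card D\<^sub>1 + card D\<^sub>2)"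

lemma degX_converse [simp]: "degX (F\<inverse>) y = degY F y"
  by (simp add: degX_def degY_def)

lemma degY_converse [simp]: "degY (F\<inverse>) x = degX F x"
  by (simp add: degX_def degY_def)

lemma edge_degree_sum_ge_converse [simp]:
  "edge_degree_sum_ge q (F\<inverse>) \<longleftrightarrow> edge_degree_sum_ge q F"
  by (auto simp: edge_degree_sum_ge_def add.commute)

lemma degX_eq_card_edges: "degX F x = card {e\<in>F. fst e = x}"
proof -
  have "{y. (x, y) \<in> F} = snd ` {e\<in>F. fst e = x}" by force
  moreover have "inj_on snd {e\<in>F. fst e = x}" by (auto simp: inj_on_def prod_eq_iff)
  ultimately show ?thesis by (simp add: degX_def card_image)
qed

lemma degY_eq_card_edges: "degY F y = card {e\<in>F. snd e = y}"
proof -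
  have "{e\<in>F\<inverse>. fst e = y} = {e\<in>F. snd e = y}\<inverse>" by auto
  then show ?thesis using degX_eq_card_edges[of "F\<inverse>" y] by simp
qed

lemma degX_le_card: "finite F \<Longrightarrow> degX F x \<le> card F"
  unfolding degX_eq_card_edges by (rule card_mono) auto

lemma sum_degY_le_card:
  assumes "finite F" "finite B"
  shows "(\<Sum>y\<in>B. degY F y) \<le> card F"
proof -
  have "(\<Sum>y\<in>B. degY F y) = card (\<Union>y\<in>B. {e\<in>F. snd e = y})"
    unfolding degY_eq_card_edges by (rule card_UN_disjoint[symmetric]) (use assms in auto)
  also have "\<dots> \<le> card F" by (rule card_mono) (use assms in auto)
  finally show ?thesis .
qed

subsection \<open>Graphs with large degree sums along edges\<close>

lemma mult_diff_le_mult_diff: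
  fixes d q s :: nat
  assumes "s + 2 \<le> d" "d + s + 2 \<le> q"
  shows "(s + 1) * (q - s - 1) \<le> d * (q - d)"
proof -
  obtain u w where "d = s + 2 + u" "q = d + s + 2 + w"
    using assms by (metis le_iff_add)
  then show ?thesis by (simp add: algebra_simps)
qed

lemma card_ge_if_degrees_small:
  assumes fin: "finite F" and "F \<noteq> {}" and deg_sum: "edge_degree_sum_ge q F"
    and small_X: "\<forall>x. degX F x < q - s - 1" and small_Y: "\<forall>y. degY F y < q - s - 1"
  shows "(s + 1) * (q - s - 1) \<le> card F"
proof -
  obtain x\<^sub>0 y\<^sub>0 where edge: "(x\<^sub>0, y\<^sub>0) \<in> F" using \<open>F \<noteq> {}\<close> by auto
  define N where "N = {y. (x\<^sub>0, y) \<in> F}"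
  define d where "d = degX F x\<^sub>0"
  have "finite N" unfolding N_def
    by (rule finite_subset[of _ "snd ` F"]) (use fin in force)+
  have "d * (q - d) = (\<Sum>y\<in>N. q - d)" by (simp add: N_def d_def degX_def)
  also have "\<dots> \<le> (\<Sum>y\<in>N. degY F y)"
    by (rule sum_mono) (use deg_sum in \<open>force simp: edge_degree_sum_ge_def N_def d_def\<close>)
  also have "\<dots> \<le> card F" using sum_degY_le_card[OF fin \<open>finite N\<close>] .
  finally have count: "d * (q - d) \<le> card F" .
  have "q \<le> d + degY F y\<^sub>0"
    using deg_sum edge by (auto simp: edge_degree_sum_ge_def d_def)
  moreover have "d < q - s - 1" "degY F y\<^sub>0 < q - s - 1"
    using small_X small_Y by (auto simp: d_def)
  ultimately have "(s + 1) * (q - s - 1) \<le> d * (q - d)"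
    by (intro mult_diff_le_mult_diff) arith+
  with count show ?thesis by simp
qed

lemma delete_left_vertex:
  assumes fin: "finite F" and deg_sum: "edge_degree_sum_ge q F"
    and card_F: "card F < (s + 2) * t" and deg_x: "t \<le> degX F x"
  defines "F' \<equiv> {e\<in>F. fst e \<noteq> x}"
  shows "finite F'" and "edge_degree_sum_ge (q - 1) F'" and "card F' < (s + 1) * t"
proof -
  show "finite F'" using fin by (simp add: F'_def)
  have "F = F' \<union> {e\<in>F. fst e = x}" "F' \<inter> {e\<in>F. fst e = x} = {}"
    by (auto simp: F'_def)
  then have "card F = card F' + card {e\<in>F. fst e = x}"
    by (metis card_Un_disjoint fin finite_Un)
  then show "card F' < (s + 1) * t"
    using card_F deg_x by (simp add: degX_eq_card_edges algebra_simps)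
  show "edge_degree_sum_ge (q - 1) F'"
    unfolding edge_degree_sum_ge_def
  proof clarify
    fix a b assume ab: "(a, b) \<in> F'"
    then have "a \<noteq> x" "(a, b) \<in> F" by (auto simp: F'_def)
    then have "degX F' a = degX F a"
      by (simp add: degX_def F'_def)
    moreover have "{e\<in>F'. snd e = b} = {e\<in>F. snd e = b} - {(x, b)}"
      using \<open>a \<noteq> x\<close> by (auto simp: F'_def)
    then have "degY F b \<le> degY F' b + 1"
      using fin diff_card_le_card_Diff[of "{(x, b)}" "{e\<in>F. snd e = b}"]
      by (simp add: degY_eq_card_edges)
    moreover have "q \<le> degX F a + degY F b"
      using deg_sum \<open>(a, b) \<in> F\<close> by (auto simp: edge_degree_sum_ge_def)
    ultimately show "q - 1 \<le> degX F' a + degY F' b" by linarith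
  qed
qed

lemma delete_right_vertex:
  assumes "finite F" "edge_degree_sum_ge q F" "card F < (s + 2) * t" "t \<le> degY F y"
  defines "F' \<equiv> {e\<in>F. snd e \<noteq> y}"
  shows "finite F'" and "edge_degree_sum_ge (q - 1) F'" and "card F' < (s + 1) * t"
proof -
  have "F' = {e\<in>F\<inverse>. fst e \<noteq> y}\<inverse>" by (auto simp: F'_def)
  then show "finite F'" "edge_degree_sum_ge (q - 1) F'" "card F' < (s + 1) * t"
    using delete_left_vertex[of "F\<inverse>" q s t y] assms by simp_all
qed

lemma small_vertex_cover:
  assumes "finite F" "edge_degree_sum_ge q F" "card F < (s + 1) * (q - s - 1)"
  shows "\<exists>C\<^sub>1 C\<^sub>2. finite C\<^sub>1 \<and> finite C\<^sub>2 \<and> vertex_cover C\<^sub>1 C\<^sub>2 F \<and> card C\<^sub>1 + card C\<^sub>2 \<le> s"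
  using assms
proof (induction s arbitrary: F q rule: less_induct)
  case (less s)
  note fin = less.prems(1) and deg_sum = less.prems(2) and card_F = less.prems(3)
  define t where "t = q - s - 1"
  \<comment> \<open>Deleting a vertex of degree at least t lowers both q and s by one and keeps t = q - s - 1.\<close>
  have reduce: "\<exists>s'. s = Suc s' \<and> card F < (s' + 2) * t \<and> (q - 1) - s' - 1 = t"
    if "t \<le> card F"
  proof -
    have "s \<noteq> 0" using that card_F by (cases s) (simp_all add: t_def)
    then obtain s' where "s = Suc s'" using not0_implies_Suc by blast
    then show ?thesis using card_F by (simp add: t_def)
  qed
  consider "F = {}"
    | (big_X) x where "t \<le> degX F x"
    | (big_Y) y where "t \<le> degY F y"
    | (small) "F \<noteq> {}" "\<forall>x. degX F x < t" "\<forall>y. degY F y < t"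
    by (meson not_le)
  then show ?case
  proof cases
    case 1
    then show ?thesis by (intro exI[of _ "{}"]) (simp add: vertex_cover_def)
  next
    case big_X
    have "t \<le> card F" using big_X degX_le_card[OF fin] by (rule le_trans)
    then obtain s' where s: "s = Suc s'" "card F < (s' + 2) * t" "(q - 1) - s' - 1 = t"
      using reduce by blast
    note del = delete_left_vertex[OF fin deg_sum s(2) big_X]
    obtain C\<^sub>1 C\<^sub>2 where "finite C\<^sub>1" "finite C\<^sub>2" "card C\<^sub>1 + card C\<^sub>2 \<le> s'"
        "vertex_cover C\<^sub>1 C\<^sub>2 {e\<in>F. fst e \<noteq> x}"
      using less.IH[of s', OF _ del(1,2)] del(3) s by auto
    then show ?thesis
      by (intro exI[of _ "insert x C\<^sub>1"] exI[of _ C\<^sub>2])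
         (auto simp: s vertex_cover_def card_insert_if)
  next
    case big_Y
    have "t \<le> card F" using big_Y degX_le_card[of "F\<inverse>"] fin le_trans by fastforce
    then obtain s' where s: "s = Suc s'" "card F < (s' + 2) * t" "(q - 1) - s' - 1 = t"
      using reduce by blast
    note del = delete_right_vertex[OF fin deg_sum s(2) big_Y]
    obtain C\<^sub>1 C\<^sub>2 where "finite C\<^sub>1" "finite C\<^sub>2" "card C\<^sub>1 + card C\<^sub>2 \<le> s'"
        "vertex_cover C\<^sub>1 C\<^sub>2 {e\<in>F. snd e \<noteq> y}"
      using less.IH[of s', OF _ del(1,2)] del(3) s by auto
    then show ?thesis
      by (intro exI[of _ C\<^sub>1] exI[of _ "insert y C\<^sub>2"])
         (auto simp: s vertex_cover_def card_insert_if)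
  next
    case small
    have "(s + 1) * (q - s - 1) \<le> card F"
      using card_ge_if_degrees_small[OF fin small(1) deg_sum] small(2,3) by (simp add: t_def)
    with card_F show ?thesis by linarith
  qed
qed

lemma min_vertex_cover_exists:
  assumes "finite C\<^sub>1" "finite C\<^sub>2" "vertex_cover C\<^sub>1 C\<^sub>2 F"
  obtains D\<^sub>1 D\<^sub>2 where "min_vertex_cover D\<^sub>1 D\<^sub>2 F" "card D\<^sub>1 + card D\<^sub>2 \<le> card C\<^sub>1 + card C\<^sub>2"
proof -
  let ?P = "\<lambda>(D\<^sub>1, D\<^sub>2). finite D\<^sub>1 \<and> finite D\<^sub>2 \<and> vertex_cover D\<^sub>1 D\<^sub>2 F"
  obtain D\<^sub>1 D\<^sub>2 where "?P (D\<^sub>1, D\<^sub>2)"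
    and "\<forall>D\<^sub>1' D\<^sub>2'. ?P (D\<^sub>1', D\<^sub>2') \<longrightarrow> card D\<^sub>1 + card D\<^sub>2 \<le> card D\<^sub>1' + card D\<^sub>2'"
    using ex_has_least_nat[of ?P "(C\<^sub>1, C\<^sub>2)" "\<lambda>(D\<^sub>1, D\<^sub>2). card D\<^sub>1 + card D\<^sub>2"] assms
    by auto
  then show ?thesis
    using that[of D\<^sub>1 D\<^sub>2] assms by (auto simp: min_vertex_cover_def)
qed

lemma small_min_vertex_cover:
  assumes "finite F" "edge_degree_sum_ge q F" "card F < (s + 1) * (q - s - 1)"
  obtains C\<^sub>1 C\<^sub>2 where "min_vertex_cover C\<^sub>1 C\<^sub>2 F" "card C\<^sub>1 + card C\<^sub>2 \<le> s"
proof -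
  obtain D\<^sub>1 D\<^sub>2 where D: "finite D\<^sub>1" "finite D\<^sub>2" "vertex_cover D\<^sub>1 D\<^sub>2 F"
      "card D\<^sub>1 + card D\<^sub>2 \<le> s"
    using small_vertex_cover[OF assms] by blast
  obtain C\<^sub>1 C\<^sub>2 where "min_vertex_cover C\<^sub>1 C\<^sub>2 F" "card C\<^sub>1 + card C\<^sub>2 \<le> card D\<^sub>1 + card D\<^sub>2"
    by (rule min_vertex_cover_exists[OF D(1-3)])
  with D(4) show ?thesis using that by simp
qed

lemma min_vertex_cover_left_witness:
  assumes "min_vertex_cover C\<^sub>1 C\<^sub>2 F" "x \<in> C\<^sub>1"
  obtains y where "(x, y) \<in> F" "y \<notin> C\<^sub>2"
proof -
  have "card (C\<^sub>1 - {x}) < card C\<^sub>1"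
    using assms by (intro card_Diff1_less) (auto simp: min_vertex_cover_def)
  then have "\<not> vertex_cover (C\<^sub>1 - {x}) C\<^sub>2 F"
    using assms(1) unfolding min_vertex_cover_def by (metis finite_Diff add_less_cancel_right not_le)
  moreover have "vertex_cover C\<^sub>1 C\<^sub>2 F" using assms(1) by (simp add: min_vertex_cover_def)
  ultimately show ?thesis using that by (auto simp: vertex_cover_def)
qed

lemma degY_le_card_cover:
  assumes "vertex_cover C\<^sub>1 C\<^sub>2 F" "finite C\<^sub>1" "y \<notin> C\<^sub>2"
  shows "degY F y \<le> card C\<^sub>1"
  unfolding degY_def by (rule card_mono) (use assms in \<open>auto simp: vertex_cover_def\<close>)

subsection \<open>The bipartite complement\<close>

lemma degX_complement:
  assumes "bipartite_graph X Y E" "x \<in> X"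
  shows "degX (X \<times> Y - E) x + degX E x = card Y"
proof -
  have "{y. (x, y) \<in> X \<times> Y - E} = Y - {y. (x, y) \<in> E}" "{y. (x, y) \<in> E} \<subseteq> Y"
    using assms by (auto simp: bipartite_graph_def)
  then show ?thesis
    using assms(1) unfolding degX_def bipartite_graph_def
    by (metis card_Diff_subset card_mono finite_subset le_add_diff_inverse2)
qed

lemma degY_complement:
  assumes "bipartite_graph X Y E" "y \<in> Y"
  shows "degY (X \<times> Y - E) y + degY E y = card X"
proof -
  have "bipartite_graph Y X (E\<inverse>)" using assms(1) by (auto simp: bipartite_graph_def)
  moreover have "(X \<times> Y - E)\<inverse> = Y \<times> X - E\<inverse>" by auto
  ultimately show ?thesis
    using degX_complement[of Y X "E\<inverse>" y] degX_converse[of "X \<times> Y - E" y] assms(2) by simp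
qed

lemma card_complement:
  assumes "bipartite_graph X Y E"
  shows "card (X \<times> Y - E) + card E = card X * card Y"
  using assms unfolding bipartite_graph_def
  by (metis card_Diff_subset card_cartesian_product card_mono finite_SigmaI finite_subset
      le_add_diff_inverse2)

lemma edge_degree_sum_ge_complement:
  assumes "bipartite_graph X Y E" "r_closed r X Y E"
  shows "edge_degree_sum_ge (card X + card Y + 1 - r) (X \<times> Y - E)"
proof -
  have "card X + card Y + 1 - r \<le> degX (X \<times> Y - E) x + degY (X \<times> Y - E) y"
    if "x \<in> X" "y \<in> Y" "(x, y) \<notin> E" for x y
    using that assms(2) degX_complement[OF assms(1), of x] degY_complement[OF assms(1), of y]
    unfolding r_closed_def by fastforce
  then show ?thesis by (auto simp: edge_degree_sum_ge_def)
qed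

lemma complement_cover_complete:
  "vertex_cover C\<^sub>1 C\<^sub>2 (X \<times> Y - E) \<Longrightarrow> (X - C\<^sub>1) \<times> (Y - C\<^sub>2) \<subseteq> E"
  by (auto simp: vertex_cover_def)

lemma complete_bipartite_of_order_from_cover:
  assumes G: "bipartite_graph X Y E" and cover: "vertex_cover C\<^sub>1 C\<^sub>2 (X \<times> Y - E)"
    and "finite C\<^sub>1" "finite C\<^sub>2" "card C\<^sub>1 + card C\<^sub>2 \<le> s" "s < card X" "s < card Y"
  shows "has_complete_bipartite_of_order X Y E (card X + card Y - s)"
proof -
  have fin: "finite X" "finite Y" using G by (auto simp: bipartite_graph_def)
  define B where "B = Y - C\<^sub>2"
  have "card X - card C\<^sub>1 \<le> card (X - C\<^sub>1)" "card Y - card C\<^sub>2 \<le> card B" "card B \<le> card Y"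
    using diff_card_le_card_Diff[OF \<open>finite C\<^sub>1\<close>, of X] diff_card_le_card_Diff[OF \<open>finite C\<^sub>2\<close>, of Y]
      card_mono[OF fin(2), of B] by (auto simp: B_def)
  then have "card X + card Y - s - card B \<le> card (X - C\<^sub>1)" using assms(5) by linarith
  then obtain A where A: "A \<subseteq> X - C\<^sub>1" "card A = card X + card Y - s - card B"
    by (meson obtain_subset_with_card_n)
  moreover have "A \<times> B \<subseteq> E"
    using A complement_cover_complete[OF cover] by (auto simp: B_def)
  moreover have "card A + card B = card X + card Y - s" "A \<noteq> {}" "B \<noteq> {}"
    using A \<open>card Y - card C\<^sub>2 \<le> card B\<close> \<open>card B \<le> card Y\<close> assms(5-7) by auto
  ultimately show ?thesis unfolding has_complete_bipartite_of_order_def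
    by (intro exI[of _ A] exI[of _ B]) (auto simp: B_def)
qed

lemma min_vertex_cover_complement_one_sided:
  assumes G: "bipartite_graph X Y E" and deg_sum: "edge_degree_sum_ge q (X \<times> Y - E)"
    and min_deg: "\<forall>x\<in>X. k \<le> degX E x" and cover: "min_vertex_cover C\<^sub>1 C\<^sub>2 (X \<times> Y - E)"
    and size: "card C\<^sub>1 + card C\<^sub>2 + card Y \<le> q + k"
  shows "C\<^sub>1 = {} \<or> C\<^sub>2 = {}"
proof (cases "C\<^sub>1 = {}")
  case False
  then obtain x where "x \<in> C\<^sub>1" by auto
  then obtain y where xy: "(x, y) \<in> X \<times> Y - E" "y \<notin> C\<^sub>2"
    by (rule min_vertex_cover_left_witness[OF cover])
  have "degY (X \<times> Y - E) y \<le> card C\<^sub>1"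
    using cover xy(2) by (intro degY_le_card_cover) (auto simp: min_vertex_cover_def)
  moreover have "degX (X \<times> Y - E) x + k \<le> card Y"
    using degX_complement[OF G, of x] min_deg xy(1) by fastforce
  moreover have "q \<le> degX (X \<times> Y - E) x + degY (X \<times> Y - E) y"
    using deg_sum xy(1) by (auto simp: edge_degree_sum_ge_def)
  ultimately have "card C\<^sub>2 = 0" using size by linarith
  then show ?thesis using cover by (simp add: min_vertex_cover_def)
qed simp

lemma has_Kab_from_right_cover:
  assumes "bipartite_graph X Y E" "vertex_cover {} C\<^sub>2 (X \<times> Y - E)"
    and "finite C\<^sub>2" "card C\<^sub>2 \<le> s"
  shows "has_Kab X Y E (card X) (card Y - s)"
proof -
  have "card Y - s \<le> card (Y - C\<^sub>2)"
    using diff_card_le_card_Diff[OF assms(3), of Y] assms(4) by linarith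
  then obtain B where "B \<subseteq> Y - C\<^sub>2" "card B = card Y - s"
    by (meson obtain_subset_with_card_n)
  then show ?thesis unfolding has_Kab_def
    using complement_cover_complete[OF assms(2)] assms(1)
    by (intro exI[of _ X] exI[of _ B]) (auto simp: bipartite_graph_def)
qed

lemma has_Kab_from_left_cover:
  assumes "bipartite_graph X Y E" "vertex_cover C\<^sub>1 {} (X \<times> Y - E)"
    and "finite C\<^sub>1" "card C\<^sub>1 \<le> s"
  shows "has_Kab X Y E (card Y) (card X - s)"
proof -
  have "card X - s \<le> card (X - C\<^sub>1)"
    using diff_card_le_card_Diff[OF assms(3), of X] assms(4) by linarith
  then obtain A where "A \<subseteq> X - C\<^sub>1" "card A = card X - s"
    by (meson obtain_subset_with_card_n)
  then show ?thesis unfolding has_Kab_def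
    using complement_cover_complete[OF assms(2)] assms(1)
    by (intro exI[of _ A] exI[of _ Y]) (auto simp: bipartite_graph_def)
qed

lemma card_complement_lt:
  assumes "bipartite_graph X Y E" "card X = n" "card Y = n - 1" "p \<le> k" "k + 2 \<le> n"
    and "int (card E) > int n * (int n - int k + int p - 2) + (int k + 2) * (int k - int p + 1)"
  shows "card (X \<times> Y - E) < (k - p + 1) * (n - k - 2)"
proof -
  have "card (X \<times> Y - E) + card E = n * (n - 1)"
    using card_complement[OF assms(1)] assms(2,3) by simp
  then have "int (card (X \<times> Y - E)) + int (card E) = int n * int (n - 1)"
    by (metis of_nat_add of_nat_mult)
  then have "int (card (X \<times> Y - E)) = int n * (int n - 1) - int (card E)"
    using assms(5) by (simp add: of_nat_diff)
  also have "\<dots> < (int k - int p + 1) * (int n - int k - 2)"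
    using assms(6) by (simp add: algebra_simps)
  also have "\<dots> = int ((k - p + 1) * (n - k - 2))"
    unfolding of_nat_mult using assms(4,5) by (simp add: of_nat_diff algebra_simps)
  finally show ?thesis by (simp only: of_nat_less_iff)
qed

theorem corollary3p2:
  fixes X :: "'a set" and Y :: "'b set" and E :: "('a \<times> 'b) set" and k p n :: nat
  assumes "p \<le> k"
    and "n \<ge> 2 * k - p + 2"
    and "bipartite_graph X Y E"
    and "nearly_balanced X Y"
    and "r_closed (n + p + 1) X Y E"
    and "card X + card Y = 2 * n - 1"
    and "int (card E) > int n * (int n - int k + int p - 2) + (int k + 2) * (int k - int p + 1)"
  shows "has_complete_bipartite_of_order X Y E (2 * n - k + p - 1)
         \<and> (min_degree_ge k X Y E \<longrightarrow>
              has_Kab X Y E (n - 1) (n - k + p) \<or> has_Kab X Y E n (n - k + p - 1))"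
proof -
  define s where "s = k - p"
  define H where "H = X \<times> Y - E"
  have cX: "card X = n" and cY: "card Y = n - 1" and "k + 2 \<le> n"
    using assms(1,2,4,6) unfolding nearly_balanced_def by auto
  have sizes: "card X + card Y + 1 - (n + p + 1) = n - 1 - p" "(n - 1 - p) - s - 1 = n - k - 2"
    "s < card X" "s < card Y" "card X + card Y - s = 2 * n - k + p - 1"
    "card X - s = n - k + p" "card Y - s = n - k + p - 1"
    using assms(1) cX cY \<open>k + 2 \<le> n\<close> by (auto simp: s_def)
  have deg_sum: "edge_degree_sum_ge (n - 1 - p) H"
    using edge_degree_sum_ge_complement[OF assms(3,5)] sizes(1) by (simp add: H_def)
  have "finite H" using assms(3) by (simp add: H_def bipartite_graph_def)
  moreover have "card H < (s + 1) * ((n - 1 - p) - s - 1)"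
    using card_complement_lt[OF assms(3) cX cY assms(1) \<open>k + 2 \<le> n\<close> assms(7)] sizes(2)
    by (simp add: H_def s_def)
  ultimately obtain C\<^sub>1 C\<^sub>2 where cover: "min_vertex_cover C\<^sub>1 C\<^sub>2 (X \<times> Y - E)"
      and size: "card C\<^sub>1 + card C\<^sub>2 \<le> s"
    using small_min_vertex_cover deg_sum unfolding H_def by blast
  then have C: "finite C\<^sub>1" "finite C\<^sub>2" "vertex_cover C\<^sub>1 C\<^sub>2 (X \<times> Y - E)"
    by (auto simp: min_vertex_cover_def)
  show ?thesis
  proof (intro conjI impI)
    show "has_complete_bipartite_of_order X Y E (2 * n - k + p - 1)"
      using complete_bipartite_of_order_from_cover[OF assms(3) C(3) C(1,2) size sizes(3,4)]
      by (simp only: sizes(5))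
  next
    assume "min_degree_ge k X Y E"
    then have "C\<^sub>1 = {} \<or> C\<^sub>2 = {}"
      using min_vertex_cover_complement_one_sided[OF assms(3) deg_sum[unfolded H_def] _ cover,
          where k = k] size cY assms(1) \<open>k + 2 \<le> n\<close> by (simp add: min_degree_ge_def s_def)
    then show "has_Kab X Y E (n - 1) (n - k + p) \<or> has_Kab X Y E n (n - k + p - 1)"
      using has_Kab_from_right_cover[OF assms(3) _ C(2), where s = s]
        has_Kab_from_left_cover[OF assms(3) _ C(1), where s = s] C(3) size sizes(6,7) cX cY
      by auto
  qed
qed

end
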